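(* Let $\beta<0,\gamma>0$, $0<\epsilon\le10^{-3}$ and $b>\frac12$. Then $$\big\|D_x^{-\frac12-4\epsilon}\mathcal{F}_x^{-1}\big(\chi_{\{|\xi|\ge a\}}\mathcal{F}_xu\big)\big\|_{L^\infty_{xt}}\le C\|u\|_{X_{0,b}}.$$
   Context: $\phi(\xi)=\beta\xi^3+\frac{\gamma}{\xi}$; $\|u\|_{X_{0,b}}=\big(\int\langle\tau+\phi(\xi)\rangle^{2b}|\mathcal{F}u(\xi,\tau)|^2d\xi d\tau\big)^{1/2}$, $\langle\cdot\rangle=1+|\cdot|$. $D_x^\alpha$ is the Fourier multiplier $|\xi|^\alpha$. $A=\max\{1,|\frac{6\gamma}{7\beta}|^{1/4},|\frac{\gamma}{3\beta}|^{1/2},|\frac{\gamma}{\beta}|,100|\beta|,100|\gamma|\}$, $a=2^{[A]}$. *)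

theory Defs
  imports "HOL-Analysis.Analysis"
begin

definition phi :: "real \<Rightarrow> real \<Rightarrow> real \<Rightarrow> real" where
  "phi beta gamma xi = beta * xi ^ 3 + gamma / xi"

definition bigA :: "real \<Rightarrow> real \<Rightarrow> real" where
  "bigA beta gamma = max 1 (max (\<bar>6 * gamma / (7 * beta)\<bar> powr (1/4))
     (max (\<bar>gamma / (3 * beta)\<bar> powr (1/2)) (max \<bar>gamma / beta\<bar>
     (max (100 * \<bar>beta\<bar>) (100 * \<bar>gamma\<bar>)))))"

definition a_const :: "real \<Rightarrow> real \<Rightarrow> real" where
  "a_const beta gamma = 2 ^ nat \<lfloor>bigA beta gamma\<rfloor>"

definition FT2 :: "(real \<times> real \<Rightarrow> complex) \<Rightarrow> real \<times> real \<Rightarrow> complex" where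
  "FT2 u = (\<lambda>(xi, tau). \<integral>p. exp (- \<i> * complex_of_real (fst p * xi + snd p * tau)) * u p \<partial>lborel)"

definition FTx :: "(real \<times> real \<Rightarrow> complex) \<Rightarrow> real \<times> real \<Rightarrow> complex" where
  "FTx u = (\<lambda>(xi, t). \<integral>x. exp (- \<i> * complex_of_real (x * xi)) * u (x, t) \<partial>lborel)"

definition X_weight :: "real \<Rightarrow> real \<Rightarrow> real \<Rightarrow> (real \<times> real \<Rightarrow> complex) \<Rightarrow> real \<times> real \<Rightarrow> real" where
  "X_weight beta gamma b u = (\<lambda>(xi, tau).
     (1 + \<bar>tau + phi beta gamma xi\<bar>) powr (2 * b) * (cmod (FT2 u (xi, tau)))\<^sup>2)"

definition X0b_norm :: "real \<Rightarrow> real \<Rightarrow> real \<Rightarrow> (real \<times> real \<Rightarrow> complex) \<Rightarrow> real" where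
  "X0b_norm beta gamma b u = sqrt (\<integral>p. X_weight beta gamma b u p \<partial>lborel)"

text \<open>D_x^s F_x^{-1}(chi_{|xi| >= a} F_x u), evaluated at (x,t).\<close>
definition Dx_high :: "real \<Rightarrow> real \<Rightarrow> (real \<times> real \<Rightarrow> complex) \<Rightarrow> real \<times> real \<Rightarrow> complex" where
  "Dx_high s a u = (\<lambda>(x, t). complex_of_real (1 / (2 * pi)) *
     (\<integral>xi. complex_of_real (indicator {xi. \<bar>xi\<bar> \<ge> a} xi * \<bar>xi\<bar> powr s)
        * exp (\<i> * complex_of_real (x * xi)) * FTx u (xi, t) \<partial>lborel))"

end

theory Submission
  imports Defs "HOL-Probability.Characteristic_Functions"
begin

(* For almost every t, Fourier inversion in the time variable expresses F_x u(xi, t) through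
   F u(xi, .), so that uniformly in x
     |D_x^s F_x^-1 (chi_{|xi| >= a} F_x u)(x, t)| <= (2 pi)^-2 \<integral>\<integral>_{|xi| >= a} |xi|^s |F u(xi, tau)| dxi dtau.
   Cauchy-Schwarz with the weights <tau + phi(xi)>^(-b) and <tau + phi(xi)>^b bounds the right-hand
   side by ||u||_{X_{0,b}} times the square root of \<integral>\<integral>_{|xi| >= a} |xi|^(2s) <tau + phi(xi)>^(-2b),
   which is finite because 2s < -1 and 2b > 1; by translation, the inner tau-integral does not
   depend on xi.
   Fourier inversion on the real line (for integrable g with integrable transform) is proved by
   Gaussian regularization: the regularized inverse transform of g^ is the convolution of g with a
   heat kernel, its integrals over intervals converge both to those of g and to those of the
   inverse transform, and an integrable function whose interval integrals all vanish is zero a.e. *)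

section \<open>Fourier inversion on the real line\<close>

definition fourier :: "(real \<Rightarrow> complex) \<Rightarrow> real \<Rightarrow> complex" where
  "fourier g w = (\<integral>t. exp (- \<i> * complex_of_real (t * w)) * g t \<partial>lborel)"

definition fourier_inverse :: "(real \<Rightarrow> complex) \<Rightarrow> real \<Rightarrow> complex" where
  "fourier_inverse h t = complex_of_real (1 / (2 * pi)) * (\<integral>w. iexp (t * w) * h w \<partial>lborel)"

definition gauss_regularized_inverse :: "(real \<Rightarrow> complex) \<Rightarrow> real \<Rightarrow> real \<Rightarrow> complex" where
  "gauss_regularized_inverse h s t = complex_of_real (1 / (2 * pi)) *
     (\<integral>w. iexp (t * w) * complex_of_real (exp (- ((s * w)^2) / 2)) * h w \<partial>lborel)"

lemma gauss_regularized_inverse_0: "gauss_regularized_inverse h 0 = fourier_inverse h"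
  by (simp add: gauss_regularized_inverse_def fourier_inverse_def fun_eq_iff)

lemma integral_std_normal_density_iexp:
  "(\<integral>x. complex_of_real (std_normal_density x) * iexp (t * x) \<partial>lborel) = exp (- (t^2) / 2)"
proof -
  have "char std_normal_distribution t = (\<integral>x. std_normal_density x *\<^sub>R iexp (t * x) \<partial>lborel)"
    unfolding char_def by (subst integral_density) auto
  then show ?thesis
    by (simp add: char_std_normal_distribution scaleR_conv_of_real)
qed

lemma normal_density_scale:
  assumes "s > 0"
  shows "s * normal_density r s (r + s * x) = std_normal_density x"
proof -
  have "sqrt (2 * pi * s\<^sup>2) = sqrt (2 * pi) * s"
    using assms by (simp add: real_sqrt_mult)
  then show ?thesis
    unfolding normal_density_def using assms by (simp add: power_mult_distrib field_simps)
qed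

lemma integral_iexp_gauss:
  assumes s: "s > 0"
  shows "(\<integral>w. iexp (y * w) * complex_of_real (exp (- ((s * w)^2) / 2)) \<partial>lborel)
        = 2 * pi * normal_density 0 s y"
proof -
  have "(\<integral>w. iexp (y * w) * complex_of_real (exp (- ((s * w)^2) / 2)) \<partial>lborel)
      = (1 / s) *\<^sub>R (\<integral>x. sqrt (2 * pi) * (std_normal_density x * iexp ((y / s) * x)) \<partial>lborel)"
    using lborel_integral_real_affine[of "1 / s" "\<lambda>w. iexp (y * w) * complex_of_real (exp (- ((s * w)^2) / 2))" 0] s
    by (simp add: std_normal_density_def ac_simps)
  also have "\<dots> = (1 / s * sqrt (2 * pi) * exp (- ((y / s)^2) / 2))"
    by (simp only: integral_mult_right_zero integral_std_normal_density_iexp) (simp add: scaleR_conv_of_real)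
  also have "1 / s * sqrt (2 * pi) * exp (- ((y / s)^2) / 2) = 2 * pi * normal_density 0 s y"
  proof -
    have "exp (- ((y / s)^2) / 2) = sqrt (2 * pi) * s * normal_density 0 s y"
      using normal_density_scale[OF s, of 0 "y / s"] s by (simp add: std_normal_density_def field_simps)
    moreover have "sqrt (2 * pi) * sqrt (2 * pi) = 2 * pi"
      by simp
    ultimately show ?thesis
      using s by (simp add: field_simps)
  qed
  finally show ?thesis by simp
qed

lemma integrable_gauss:
  assumes "s > 0"
  shows "integrable lborel (\<lambda>w. complex_of_real (exp (- ((s * w)^2) / 2)))"
proof -
  have "exp (- ((s * w)^2) / 2) = sqrt (2 * pi) / s * normal_density 0 (1 / s) w" for w
    using normal_density_scale[of "1 / s" 0 "s * w"] assms by (simp add: std_normal_density_def field_simps)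
  then show ?thesis
    using assms by (simp add: integrable_mult_right)
qed

lemma (in pair_sigma_finite) integrable_product:
  fixes f :: "'a \<Rightarrow> 'c::{real_normed_field, second_countable_topology, banach}"
    and g :: "'b \<Rightarrow> 'c"
  assumes f: "integrable M1 f" and g: "integrable M2 g"
  shows "integrable (M1 \<Otimes>\<^sub>M M2) (\<lambda>(x, y). f x * g y)"
proof (rule integrableI_bounded)
  show "(\<lambda>(x, y). f x * g y) \<in> borel_measurable (M1 \<Otimes>\<^sub>M M2)"
    using f g by measurable
  have "(\<integral>\<^sup>+p. norm ((\<lambda>(x, y). f x * g y) p) \<partial>(M1 \<Otimes>\<^sub>M M2))
      = (\<integral>\<^sup>+x. norm (f x) \<partial>M1) * (\<integral>\<^sup>+y. norm (g y) \<partial>M2)"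
    using f g
    by (subst M2.nn_integral_fst[symmetric])
       (auto simp: norm_mult ennreal_mult nn_integral_cmult nn_integral_multc)
  also have "\<dots> < \<infinity>"
    using f g unfolding integrable_iff_bounded by (simp add: ennreal_mult_less_top)
  finally show "(\<integral>\<^sup>+p. norm ((\<lambda>(x, y). f x * g y) p) \<partial>(M1 \<Otimes>\<^sub>M M2)) < \<infinity>" .
qed

lemma borel_measurable_fourier_inverse [measurable]:
  assumes [measurable]: "h \<in> borel_measurable borel"
  shows "fourier_inverse h \<in> borel_measurable borel"
  unfolding fourier_inverse_def[abs_def] by measurable

lemma borel_measurable_gauss_regularized_inverse [measurable]:
  assumes [measurable]: "h \<in> borel_measurable borel"
  shows "gauss_regularized_inverse h s \<in> borel_measurable borel"
  unfolding gauss_regularized_inverse_def[abs_def] by measurable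

lemma gauss_regularized_inverse_fourier:
  fixes g :: "real \<Rightarrow> complex"
  assumes g: "integrable lborel g" and s: "s > 0"
  shows "gauss_regularized_inverse (fourier g) s t = (\<integral>r. complex_of_real (normal_density r s t) * g r \<partial>lborel)"
proof -
  have [measurable]: "g \<in> borel_measurable borel"
    using g by auto
  define F where "F r w = iexp (t * w) * complex_of_real (exp (- ((s * w)^2) / 2))
    * (exp (- \<i> * complex_of_real (r * w)) * g r)" for r w
  have "integrable (lborel \<Otimes>\<^sub>M lborel) (\<lambda>(r, w). F r w)"
  proof (rule Bochner_Integration.integrable_bound)
    show "integrable (lborel \<Otimes>\<^sub>M lborel) (\<lambda>(r, w). g r * complex_of_real (exp (- ((s * w)^2) / 2)))"
      using g integrable_gauss[OF s] by (rule lborel_pair.integrable_product)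
    show "AE p in lborel \<Otimes>\<^sub>M lborel. norm ((\<lambda>(r, w). F r w) p)
        \<le> norm ((\<lambda>(r, w). g r * complex_of_real (exp (- ((s * w)^2) / 2))) p)"
      by (auto simp: F_def norm_mult)
  qed (simp add: F_def)
  then have "(\<integral>w. \<integral>r. F r w \<partial>lborel \<partial>lborel) = (\<integral>r. \<integral>w. F r w \<partial>lborel \<partial>lborel)"
    by (rule lborel_pair.Fubini_integral)
  moreover have "(\<integral>w. F r w \<partial>lborel) = complex_of_real (2 * pi * normal_density r s t) * g r" for r
  proof -
    have "(\<integral>w. F r w \<partial>lborel)
        = (\<integral>w. iexp ((t - r) * w) * complex_of_real (exp (- ((s * w)^2) / 2)) \<partial>lborel) * g r"
      unfolding F_def
      by (subst integral_mult_left_zero[symmetric], rule Bochner_Integration.integral_cong)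
         (simp_all add: exp_add[symmetric] algebra_simps)
    moreover have "normal_density 0 s (t - r) = normal_density r s t"
      by (simp add: normal_density_def power2_commute)
    ultimately show ?thesis
      using integral_iexp_gauss[OF s, of "t - r"] by simp
  qed
  ultimately show ?thesis
    by (simp add: gauss_regularized_inverse_def fourier_def F_def mult.assoc)
qed

lemma norm_gauss_regularized_inverse_le:
  assumes "integrable lborel h"
  shows "norm (gauss_regularized_inverse h s t) \<le> 1 / (2 * pi) * (\<integral>w. norm (h w) \<partial>lborel)"
proof -
  have [measurable]: "h \<in> borel_measurable borel"
    using assms by auto
  have factor: "norm (iexp (t * w) * complex_of_real (exp (- ((s * w)^2) / 2)) * h w) \<le> norm (h w)" for w
    by (simp add: norm_mult mult_left_le_one_le)
  have "norm (\<integral>w. iexp (t * w) * complex_of_real (exp (- ((s * w)^2) / 2)) * h w \<partial>lborel)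
      \<le> (\<integral>w. norm (h w) \<partial>lborel)"
  proof -
    have "integrable lborel (\<lambda>w. iexp (t * w) * complex_of_real (exp (- ((s * w)^2) / 2)) * h w)"
      using factor by (intro Bochner_Integration.integrable_bound[OF assms]) auto
    then show ?thesis
      using assms factor
      by (intro order.trans[OF integral_norm_bound] integral_mono integrable_norm) auto
  qed
  from mult_left_mono[OF this, of "1 / (2 * pi)"] show ?thesis
    unfolding gauss_regularized_inverse_def norm_mult norm_of_real by simp
qed

lemma gauss_regularized_inverse_tendsto:
  assumes h: "integrable lborel h"
  shows "(\<lambda>n. gauss_regularized_inverse h (1 / Suc n) t) \<longlonglongrightarrow> fourier_inverse h t"
proof -
  have "(\<lambda>n. \<integral>w. iexp (t * w) * complex_of_real (exp (- ((1 / Suc n * w)^2) / 2)) * h w \<partial>lborel)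
      \<longlonglongrightarrow> (\<integral>w. iexp (t * w) * h w \<partial>lborel)"
  proof (rule integral_dominated_convergence[where w = "\<lambda>w. norm (h w)"])
    show "AE w in lborel. (\<lambda>n. iexp (t * w) * complex_of_real (exp (- ((1 / Suc n * w)^2) / 2)) * h w)
        \<longlonglongrightarrow> iexp (t * w) * h w" for w
    proof (rule AE_I2)
      fix w
      have "(\<lambda>n. 1 / real (Suc n)) \<longlonglongrightarrow> 0"
        by (rule LIMSEQ_inverse_real_of_nat[unfolded inverse_eq_divide])
      then have "(\<lambda>n. exp (- ((1 / real (Suc n) * w)^2) / 2)) \<longlonglongrightarrow> exp (- ((0 * w)^2) / 2)"
        by (intro tendsto_intros) auto
      then have "(\<lambda>n. complex_of_real (exp (- ((1 / real (Suc n) * w)^2) / 2)))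
          \<longlonglongrightarrow> complex_of_real (exp (- ((0 * w)^2) / 2))"
        by (rule tendsto_of_real)
      from tendsto_mult[OF tendsto_mult[OF tendsto_const this] tendsto_const, of "iexp (t * w)" "h w"]
      show "(\<lambda>n. iexp (t * w) * complex_of_real (exp (- ((1 / Suc n * w)^2) / 2)) * h w)
          \<longlonglongrightarrow> iexp (t * w) * h w"
        by simp
    qed
  qed (use h in \<open>auto simp: norm_mult mult_left_le_one_le\<close>)
  then show ?thesis
    unfolding gauss_regularized_inverse_def fourier_inverse_def by (intro tendsto_mult_left)
qed

definition normal_mass :: "real set \<Rightarrow> real \<Rightarrow> real \<Rightarrow> real" where
  "normal_mass I s r = (\<integral>t. indicator I t * normal_density r s t \<partial>lborel)"

lemma normal_mass_std_normal:
  assumes s: "s > 0"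
  shows "normal_mass I s r = (\<integral>x. indicator I (r + s * x) * std_normal_density x \<partial>lborel)"
proof -
  have "normal_mass I s r = \<bar>s\<bar> *\<^sub>R (\<integral>x. indicator I (r + s * x) * normal_density r s (r + s * x) \<partial>lborel)"
    unfolding normal_mass_def
    using lborel_integral_real_affine[where f = "\<lambda>t. indicator I t * normal_density r s t" and c = s and t = r] s
    by simp
  also have "\<dots> = (\<integral>x. s * (indicator I (r + s * x) * normal_density r s (r + s * x)) \<partial>lborel)"
    using s by simp
  also have "\<dots> = (\<integral>x. indicator I (r + s * x) * std_normal_density x \<partial>lborel)"
    by (rule Bochner_Integration.integral_cong[OF refl]) (metis normal_density_scale[OF s] mult.left_commute)
  finally show ?thesis .
qed

lemma normal_mass_nonneg: "0 \<le> normal_mass I s r"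
  unfolding normal_mass_def by (intro integral_nonneg_AE) auto

lemma normal_mass_le_1:
  assumes [measurable]: "I \<in> sets borel" and s: "s > 0"
  shows "normal_mass I s r \<le> 1"
proof -
  have "normal_mass I s r \<le> (\<integral>t. normal_density r s t \<partial>lborel)"
    unfolding normal_mass_def using s
    by (intro integral_mono Bochner_Integration.integrable_bound[OF integrable_normal_density])
       (auto simp: indicator_def)
  then show ?thesis
    using s by simp
qed

lemma borel_measurable_normal_mass [measurable]:
  assumes [measurable]: "I \<in> sets borel"
  shows "normal_mass I s \<in> borel_measurable borel"
  unfolding normal_mass_def[abs_def] normal_density_def by measurable

lemma eventually_indicator_Ioc_eq:
  fixes r c d :: real
  assumes "r \<noteq> c" "r \<noteq> d"
  shows "eventually (\<lambda>y. indicator {c<..d} y = (indicator {c<..d} r :: real)) (nhds r)"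
proof (cases "r \<in> {c<..d}")
  case True
  then have "r \<in> {c<..<d}"
    using assms by auto
  then show ?thesis
    using True unfolding eventually_nhds by (intro exI[of _ "{c<..<d}"]) auto
next
  case False
  then have "r \<in> {..<c} \<union> {d<..}"
    using assms by auto
  then show ?thesis
    using False unfolding eventually_nhds by (intro exI[of _ "{..<c} \<union> {d<..}"]) auto
qed

lemma normal_mass_tendsto_indicator:
  assumes "r \<noteq> c" "r \<noteq> d"
  shows "(\<lambda>n. normal_mass {c<..d} (1 / Suc n) r) \<longlonglongrightarrow> indicator {c<..d} r"
proof -
  let ?I = "{c<..d}"
  have "(\<lambda>n. \<integral>x. indicator ?I (r + 1 / Suc n * x) * std_normal_density x \<partial>lborel)
      \<longlonglongrightarrow> (\<integral>x. indicator ?I r * std_normal_density x \<partial>lborel)"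
  proof (rule integral_dominated_convergence[where w = std_normal_density])
    show "AE x in lborel. (\<lambda>n. indicator ?I (r + 1 / Suc n * x) * std_normal_density x)
        \<longlonglongrightarrow> indicator ?I r * std_normal_density x"
    proof (rule AE_I2, rule tendsto_mult[OF _ tendsto_const])
      fix x
      have "(\<lambda>n. r + 1 / real (Suc n) * x) \<longlonglongrightarrow> r"
        using tendsto_add[OF tendsto_const tendsto_mult[OF LIMSEQ_inverse_real_of_nat tendsto_const]]
        by (simp add: inverse_eq_divide)
      with eventually_indicator_Ioc_eq[OF assms]
      have "eventually (\<lambda>n. indicator ?I (r + 1 / Suc n * x) = (indicator ?I r :: real)) sequentially"
        by (rule eventually_compose_filterlim)
      then show "(\<lambda>n. indicator ?I (r + 1 / Suc n * x) :: real) \<longlonglongrightarrow> indicator ?I r"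
        by (rule tendsto_eventually)
    qed
  qed (auto simp: indicator_def)
  then show ?thesis
    by (simp add: normal_mass_std_normal)
qed

lemma interval_integral_gauss_regularized_inverse:
  fixes g :: "real \<Rightarrow> complex"
  assumes g: "integrable lborel g" and s: "s > 0"
  shows "(\<integral>t. indicator {c<..d} t *\<^sub>R gauss_regularized_inverse (fourier g) s t \<partial>lborel)
       = (\<integral>r. normal_mass {c<..d} s r * g r \<partial>lborel)"
proof -
  let ?I = "{c<..d}"
  have [measurable]: "g \<in> borel_measurable borel"
    using g by auto
  define K where "K t r = indicator ?I t *\<^sub>R (complex_of_real (normal_density r s t) * g r)" for t r
  have K_measurable [measurable]: "(\<lambda>(t, r). K t r) \<in> borel_measurable (lborel \<Otimes>\<^sub>M lborel)"
    unfolding K_def normal_density_def by measurable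
  have "integrable (lborel \<Otimes>\<^sub>M lborel) (\<lambda>(t, r). K t r)"
  proof (rule integrableI_bounded[OF K_measurable])
    have "(\<integral>\<^sup>+p. norm ((\<lambda>(t, r). K t r) p) \<partial>(lborel \<Otimes>\<^sub>M lborel))
       \<le> (\<integral>\<^sup>+p. ennreal (normal_density (snd p) s (fst p)) * norm (g (snd p)) \<partial>(lborel \<Otimes>\<^sub>M lborel))"
      by (intro nn_integral_mono) (auto simp: K_def norm_mult indicator_def ennreal_mult[symmetric])
    also have "\<dots> = (\<integral>\<^sup>+r. (\<integral>\<^sup>+t. normal_density r s t \<partial>lborel) * norm (g r) \<partial>lborel)"
      by (subst lborel_pair.nn_integral_snd[symmetric])
         (auto simp: normal_density_def nn_integral_multc)
    also have "\<dots> = (\<integral>\<^sup>+r. norm (g r) \<partial>lborel)"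
      using s by (simp add: nn_integral_eq_integral)
    also have "\<dots> < \<infinity>"
      using g unfolding integrable_iff_bounded by simp
    finally show "(\<integral>\<^sup>+p. norm ((\<lambda>(t, r). K t r) p) \<partial>(lborel \<Otimes>\<^sub>M lborel)) < \<infinity>" .
  qed
  then have "(\<integral>t. \<integral>r. K t r \<partial>lborel \<partial>lborel) = (\<integral>r. \<integral>t. K t r \<partial>lborel \<partial>lborel)"
    by (rule lborel_pair.Fubini_integral[symmetric])
  moreover have "(\<integral>t. K t r \<partial>lborel) = normal_mass ?I s r * g r" for r
  proof -
    have "(\<integral>t. K t r \<partial>lborel) = (\<integral>t. complex_of_real (indicator ?I t * normal_density r s t) * g r \<partial>lborel)"
      unfolding K_def by (rule Bochner_Integration.integral_cong[OF refl]) (simp add: scaleR_conv_of_real)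
    then show ?thesis
      unfolding normal_mass_def by (simp only: integral_mult_left_zero integral_complex_of_real)
  qed
  ultimately show ?thesis
    by (simp add: K_def gauss_regularized_inverse_fourier[OF g s])
qed

lemma interval_integral_fourier_inverse:
  fixes g :: "real \<Rightarrow> complex"
  assumes g: "integrable lborel g" and h: "integrable lborel (fourier g)"
  shows "(\<integral>t. indicator {c<..d} t *\<^sub>R g t \<partial>lborel)
       = (\<integral>t. indicator {c<..d} t *\<^sub>R fourier_inverse (fourier g) t \<partial>lborel)"
proof (rule LIMSEQ_unique)
  let ?I = "{c<..d}"
  let ?A = "\<lambda>n. \<integral>t. indicator ?I t *\<^sub>R gauss_regularized_inverse (fourier g) (1 / Suc n) t \<partial>lborel"
  define B where "B = 1 / (2 * pi) * (\<integral>w. norm (fourier g w) \<partial>lborel)"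
  have "emeasure lborel ?I < \<infinity>"
    by (cases "c \<le> d") simp_all
  then have "integrable lborel (\<lambda>t. indicator ?I t *\<^sub>R B)"
    by (intro integrable_indicator) auto
  then show "?A \<longlonglongrightarrow> (\<integral>t. indicator ?I t *\<^sub>R fourier_inverse (fourier g) t \<partial>lborel)"
  proof (rule integral_dominated_convergence[rotated 2])
    show "AE t in lborel. (\<lambda>n. indicator ?I t *\<^sub>R gauss_regularized_inverse (fourier g) (1 / Suc n) t)
        \<longlonglongrightarrow> indicator ?I t *\<^sub>R fourier_inverse (fourier g) t"
      using h by (intro AE_I2 tendsto_scaleR tendsto_const gauss_regularized_inverse_tendsto)
    show "AE t in lborel. norm (indicator ?I t *\<^sub>R gauss_regularized_inverse (fourier g) (1 / Suc n) t)
        \<le> indicator ?I t *\<^sub>R B" for n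
      using norm_gauss_regularized_inverse_le[OF h] by (auto simp: B_def indicator_def)
  qed (use g h in auto)
  have "?A = (\<lambda>n. \<integral>r. normal_mass ?I (1 / Suc n) r * g r \<partial>lborel)"
    using g by (intro ext interval_integral_gauss_regularized_inverse) simp_all
  also have "\<dots> \<longlonglongrightarrow> (\<integral>r. indicator ?I r *\<^sub>R g r \<partial>lborel)"
  proof (rule integral_dominated_convergence[where w = "\<lambda>r. norm (g r)"])
    have "AE r in lborel. r \<noteq> c" "AE r in lborel. r \<noteq> d"
      by (rule AE_lborel_singleton)+
    then show "AE r in lborel. (\<lambda>n. normal_mass ?I (1 / Suc n) r * g r) \<longlonglongrightarrow> indicator ?I r *\<^sub>R g r"
      unfolding scaleR_conv_of_real
      by eventually_elim (intro tendsto_mult tendsto_of_real normal_mass_tendsto_indicator tendsto_const)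
    show "AE r in lborel. norm (normal_mass ?I (1 / Suc n) r * g r) \<le> norm (g r)" for n
      by (auto simp: norm_mult normal_mass_nonneg normal_mass_le_1 intro!: mult_left_le_one_le)
  qed (use g in auto)
  finally show "?A \<longlonglongrightarrow> (\<integral>r. indicator ?I r *\<^sub>R g r \<partial>lborel)" .
qed

text \<open>The positive and negative parts of \<open>\<psi>\<close> are densities of two finite measures that agree on
  all half-lines \<open>{x<..}\<close>, hence coincide.\<close>

lemma AE_eq_0_if_interval_integrals_eq_0_real:
  fixes \<psi> :: "real \<Rightarrow> real"
  assumes \<psi>: "integrable lborel \<psi>"
    and support: "\<And>t. R < t \<Longrightarrow> \<psi> t = 0"
    and intervals: "\<And>c d. (\<integral>t. indicator {c<..d} t * \<psi> t \<partial>lborel) = 0"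
  shows "AE t in lborel. \<psi> t = 0"
proof -
  have [measurable]: "\<psi> \<in> borel_measurable borel"
    using \<psi> by auto
  let ?P = "\<lambda>t. ennreal (\<psi> t)" and ?Q = "\<lambda>t. ennreal (- \<psi> t)"
  have half_line: "emeasure (density lborel ?P) {x<..} = emeasure (density lborel ?Q) {x<..}"
    and half_line_finite: "emeasure (density lborel ?P) {x<..} < \<infinity>" for x
  proof -
    let ?f = "\<lambda>t. indicator {x<..} t * \<psi> t"
    have f: "integrable lborel ?f"
      using integrable_mult_indicator[OF _ \<psi>, of "{x<..}"] by simp
    have "?f = (\<lambda>t. indicator {x<..max x R} t * \<psi> t)"
      using support by (auto simp: fun_eq_iff indicator_def)
    then have "enn2real (\<integral>\<^sup>+t. ?f t \<partial>lborel) = enn2real (\<integral>\<^sup>+t. ennreal (- ?f t) \<partial>lborel)"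
      using intervals real_lebesgue_integral_def[OF f] by simp
    moreover have "(\<integral>\<^sup>+t. ?f t \<partial>lborel) \<noteq> \<infinity>" "(\<integral>\<^sup>+t. ennreal (- ?f t) \<partial>lborel) \<noteq> \<infinity>"
      using f unfolding real_integrable_def by auto
    ultimately have "(\<integral>\<^sup>+t. ?f t \<partial>lborel) = (\<integral>\<^sup>+t. ennreal (- ?f t) \<partial>lborel)"
      by (cases "\<integral>\<^sup>+t. ?f t \<partial>lborel"; cases "\<integral>\<^sup>+t. ennreal (- ?f t) \<partial>lborel") auto
    moreover have "emeasure (density lborel ?P) {x<..} = (\<integral>\<^sup>+t. ?f t \<partial>lborel)"
      "emeasure (density lborel ?Q) {x<..} = (\<integral>\<^sup>+t. ennreal (- ?f t) \<partial>lborel)"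
      by (auto simp: emeasure_density indicator_def intro!: nn_integral_cong)
    ultimately show "emeasure (density lborel ?P) {x<..} = emeasure (density lborel ?Q) {x<..}"
      "emeasure (density lborel ?P) {x<..} < \<infinity>"
      using \<open>(\<integral>\<^sup>+t. ?f t \<partial>lborel) \<noteq> \<infinity>\<close> by (simp_all add: top.not_eq_extremum)
  qed
  have "density lborel ?P = density lborel ?Q"
    by (rule measure_eqI_lessThan[OF _ _ half_line_finite half_line]) simp_all
  moreover have "(\<integral>\<^sup>+t. ?P t \<partial>lborel) \<noteq> \<infinity>"
    using \<psi> unfolding real_integrable_def by auto
  ultimately have "AE t in lborel. ?P t = ?Q t"
    by (subst finite_density_unique[symmetric]) auto
  then show ?thesis
  proof eventually_elim
    case (elim t)
    then show ?case
      by (cases "\<psi> t > 0"; cases "\<psi> t < 0") (auto simp: ennreal_neg)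
  qed
qed

lemma AE_eq_0_if_interval_integrals_eq_0:
  fixes f :: "real \<Rightarrow> complex"
  assumes f: "integrable lborel f"
    and support: "\<And>t. R < t \<Longrightarrow> f t = 0"
    and intervals: "\<And>c d. (\<integral>t. indicator {c<..d} t *\<^sub>R f t \<partial>lborel) = 0"
  shows "AE t in lborel. f t = 0"
proof -
  have part: "AE t in lborel. q (f t) = 0" if q: "q = Re \<or> q = Im" for q
  proof (rule AE_eq_0_if_interval_integrals_eq_0_real)
    show "integrable lborel (\<lambda>t. q (f t))"
      using q f by auto
    show "q (f t) = 0" if "R < t" for t
      using q support[OF that] by auto
    show "(\<integral>t. indicator {c<..d} t * q (f t) \<partial>lborel) = 0" for c d
    proof -
      have "bounded_linear q"
        using q bounded_linear_Re bounded_linear_Im by blast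
      moreover have "integrable lborel (\<lambda>t. indicator {c<..d} t *\<^sub>R f t)"
        by (rule integrable_mult_indicator[OF _ f]) simp
      ultimately have "(\<integral>t. q (indicator {c<..d} t *\<^sub>R f t) \<partial>lborel) = q 0"
        unfolding intervals[of c d, symmetric] by (rule integral_bounded_linear)
      then show ?thesis
        using q by auto
    qed
  qed
  from part[OF disjI1[OF refl]] part[OF disjI2[OF refl]] show ?thesis
    by eventually_elim (simp add: complex_eq_iff)
qed

lemma integrable_indicator_fourier_inverse:
  assumes h: "integrable lborel h"
  shows "integrable lborel (\<lambda>t. indicator {c<..d} t *\<^sub>R fourier_inverse h t)"
proof (rule integrableI_bounded_set_indicator)
  show "emeasure lborel {c<..d} < \<infinity>"
    by (cases "c \<le> d") simp_all
  show "AE t in lborel. t \<in> {c<..d} \<longrightarrow> norm (fourier_inverse h t) \<le> 1 / (2 * pi) * (\<integral>w. norm (h w) \<partial>lborel)"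
    using norm_gauss_regularized_inverse_le[OF h, of 0] by (simp add: gauss_regularized_inverse_0)
qed (use h in auto)

theorem fourier_inversion:
  fixes g :: "real \<Rightarrow> complex"
  assumes g: "integrable lborel g" and h: "integrable lborel (fourier g)"
  shows "AE t in lborel. g t = fourier_inverse (fourier g) t"
proof -
  have truncated: "AE t in lborel. indicator {- real n<..real n} t *\<^sub>R (g t - fourier_inverse (fourier g) t) = 0"
    for n :: nat
  proof (rule AE_eq_0_if_interval_integrals_eq_0[where R = "real n"])
    let ?G = "fourier_inverse (fourier g)"
    show "integrable lborel (\<lambda>t. indicator {- real n<..real n} t *\<^sub>R (g t - ?G t))"
      unfolding scaleR_diff_right
      by (intro Bochner_Integration.integrable_diff integrable_mult_indicator g integrable_indicator_fourier_inverse[OF h]) auto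
    fix c d
    let ?a = "max c (- real n)" and ?b = "min d (real n)"
    have "(\<integral>t. indicator {c<..d} t *\<^sub>R (indicator {- real n<..real n} t *\<^sub>R (g t - ?G t)) \<partial>lborel)
       = (\<integral>t. indicator {?a<..?b} t *\<^sub>R g t - indicator {?a<..?b} t *\<^sub>R ?G t \<partial>lborel)"
      by (rule Bochner_Integration.integral_cong[OF refl]) (auto simp: indicator_def algebra_simps)
    also have "\<dots> = 0"
      using interval_integral_fourier_inverse[OF g h, of ?a ?b]
      by (subst Bochner_Integration.integral_diff)
         (auto intro!: integrable_mult_indicator g integrable_indicator_fourier_inverse[OF h])
    finally show "(\<integral>t. indicator {c<..d} t *\<^sub>R (indicator {- real n<..real n} t *\<^sub>R (g t - ?G t)) \<partial>lborel) = 0" .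
  qed auto
  have "AE t in lborel. \<forall>n::nat. indicator {- real n<..real n} t *\<^sub>R (g t - fourier_inverse (fourier g) t) = 0"
    by (rule AE_all_countable[THEN iffD2]) (intro allI truncated)
  then show ?thesis
  proof eventually_elim
    case (elim t)
    obtain n :: nat where "\<bar>t\<bar> < real n"
      using reals_Archimedean2 by blast
    with elim[rule_format, of n] show ?case
      by (auto simp: indicator_def)
  qed
qed

section \<open>Partial Fourier transforms in the plane\<close>

lemma borel_measurable_FTx [measurable]:
  assumes [measurable]: "u \<in> borel_measurable borel"
  shows "FTx u \<in> borel_measurable borel"
proof -
  have "FTx u = (\<lambda>p. \<integral>x. exp (- \<i> * complex_of_real (x * fst p)) * u (x, snd p) \<partial>lborel)"
    by (auto simp: FTx_def fun_eq_iff)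
  then show ?thesis
    by (simp only: borel_prod[symmetric]) measurable
qed

lemma integrable_FTx_slice:
  assumes u: "integrable lborel u"
  shows "integrable lborel (\<lambda>t. FTx u (\<xi>, t))"
proof (rule Bochner_Integration.integrable_bound)
  have "integrable (lborel \<Otimes>\<^sub>M lborel) (\<lambda>(x, t). norm (u (x, t)))"
    using integrable_norm[OF u] by (simp add: lborel_prod case_prod_beta')
  then show "integrable lborel (\<lambda>t. \<integral>x. norm (u (x, t)) \<partial>lborel)"
    by (rule lborel_pair.integrable_snd)
  have "norm (FTx u (\<xi>, t)) \<le> (\<integral>x. norm (exp (- \<i> * complex_of_real (x * \<xi>)) * u (x, t)) \<partial>lborel)" for t
    unfolding FTx_def by (simp add: integral_norm_bound)
  then show "AE t in lborel. norm (FTx u (\<xi>, t)) \<le> norm (\<integral>x. norm (u (x, t)) \<partial>lborel)"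
    by (simp add: norm_mult)
qed (use u in auto)

lemma fourier_FTx_slice:
  assumes u: "integrable lborel u"
  shows "fourier (\<lambda>t. FTx u (\<xi>, t)) \<tau> = FT2 u (\<xi>, \<tau>)"
proof -
  define f where "f x t = exp (- \<i> * complex_of_real (x * \<xi> + t * \<tau>)) * u (x, t)" for x t
  have [measurable]: "u \<in> borel_measurable (borel \<Otimes>\<^sub>M borel)"
    using u by (simp add: borel_prod)
  have [measurable]: "case_prod f \<in> borel_measurable (lborel \<Otimes>\<^sub>M lborel)"
    unfolding f_def by measurable
  have "integrable (lborel \<Otimes>\<^sub>M lborel) (case_prod f)"
    using u unfolding lborel_prod[symmetric]
    by (rule Bochner_Integration.integrable_bound) (auto simp: f_def norm_mult)
  then have "(\<integral>t. \<integral>x. f x t \<partial>lborel \<partial>lborel) = integral\<^sup>L (lborel \<Otimes>\<^sub>M lborel) (case_prod f)"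
    by (rule lborel_pair.integral_snd)
  moreover have "exp (- \<i> * complex_of_real (t * \<tau>)) * FTx u (\<xi>, t) = (\<integral>x. f x t \<partial>lborel)" for t
    by (simp add: FTx_def f_def exp_add[symmetric] algebra_simps flip: integral_mult_right_zero)
  ultimately show ?thesis
    unfolding fourier_def FT2_def lborel_prod f_def by (simp add: case_prod_beta')
qed

lemma AE_FTx_eq_fourier_inverse_FT2:
  assumes u: "integrable lborel u" and F: "integrable lborel (FT2 u)"
  shows "AE t in lborel. AE \<xi> in lborel. FTx u (\<xi>, t) = fourier_inverse (\<lambda>w. FT2 u (\<xi>, w)) t"
proof -
  have [measurable]: "u \<in> borel_measurable borel" "FT2 u \<in> borel_measurable borel"
    using u F by auto
  have "AE \<xi> in lborel. integrable lborel (\<lambda>w. FT2 u (\<xi>, w))"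
    using lborel_pair.AE_integrable_fst'[of "FT2 u"] F by (simp add: lborel_prod)
  then have "AE \<xi> in lborel. AE t in lborel. FTx u (\<xi>, t) = fourier_inverse (\<lambda>w. FT2 u (\<xi>, w)) t"
  proof eventually_elim
    case (elim \<xi>)
    have "fourier (\<lambda>t. FTx u (\<xi>, t)) = (\<lambda>w. FT2 u (\<xi>, w))"
      using fourier_FTx_slice[OF u] by blast
    with elim show ?case
      using fourier_inversion[OF integrable_FTx_slice[OF u], of \<xi>] by simp
  qed
  have [measurable]: "FTx u \<in> borel_measurable (borel \<Otimes>\<^sub>M borel)" "FT2 u \<in> borel_measurable (borel \<Otimes>\<^sub>M borel)"
    by (simp_all add: borel_prod)
  have "sets (lborel \<Otimes>\<^sub>M lborel) = sets ((borel :: real measure) \<Otimes>\<^sub>M (borel :: real measure))"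
    by (rule sets_pair_measure_cong) simp_all
  moreover have "{p \<in> space (borel \<Otimes>\<^sub>M borel). FTx u (fst p, snd p) = fourier_inverse (\<lambda>w. FT2 u (fst p, w)) (snd p)}
      \<in> sets ((borel :: real measure) \<Otimes>\<^sub>M (borel :: real measure))"
    unfolding fourier_inverse_def by measurable
  ultimately have "{p \<in> space (lborel \<Otimes>\<^sub>M lborel). FTx u (fst p, snd p) = fourier_inverse (\<lambda>w. FT2 u (fst p, w)) (snd p)}
      \<in> sets (lborel \<Otimes>\<^sub>M lborel)"
    by (simp add: space_pair_measure)
  with \<open>AE \<xi> in lborel. AE t in lborel. _\<close> show ?thesis
    by (subst lborel_pair.AE_commute[symmetric])
qed

section \<open>Integrability of the dual weight\<close>

lemma nn_integral_abs_powr_tail_finite: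
  fixes e c :: real
  assumes e: "e < -1" and c: "c > 0"
  shows "(\<integral>\<^sup>+x. ennreal (\<bar>x\<bar> powr e) * indicator {x. c \<le> \<bar>x\<bar>} x \<partial>lborel) < \<infinity>"
proof -
  let ?R = "\<integral>\<^sup>+x. ennreal (x powr e) * indicator {c..} x \<partial>lborel"
  have R: "?R = ennreal (- (c powr (e + 1)) / (e + 1))"
    by (rule nn_integral_has_integral_lebesgue'[OF _ has_integral_powr_to_inf[OF e c]]) simp
  have "(\<integral>\<^sup>+x. ennreal (\<bar>x\<bar> powr e) * indicator {x. c \<le> \<bar>x\<bar>} x \<partial>lborel)
     \<le> (\<integral>\<^sup>+x. ennreal (x powr e) * indicator {c..} x + ennreal ((- x) powr e) * indicator {c..} (- x) \<partial>lborel)"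
    using c by (intro nn_integral_mono) (auto simp: indicator_def)
  also have "\<dots> = ?R + (\<integral>\<^sup>+x. ennreal ((- x) powr e) * indicator {c..} (- x) \<partial>lborel)"
    by (rule nn_integral_add) auto
  also have "(\<integral>\<^sup>+x. ennreal ((- x) powr e) * indicator {c..} (- x) \<partial>lborel) = ?R"
    using nn_integral_real_affine[where f = "\<lambda>x. ennreal (x powr e) * indicator {c..} x" and c = "-1" and t = 0]
    by simp
  finally show ?thesis
    using R by (simp add: order_le_less_trans)
qed

lemma nn_integral_bracket_powr_finite:
  fixes p :: real
  assumes p: "p > 1"
  shows "(\<integral>\<^sup>+w. ennreal ((1 + \<bar>w\<bar>) powr (- p)) \<partial>lborel) < \<infinity>"
proof -
  have "ennreal ((1 + \<bar>w\<bar>) powr (- p))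
      \<le> indicator {-1..1} w + ennreal (\<bar>w\<bar> powr (- p)) * indicator {x. 1 \<le> \<bar>x\<bar>} w" for w :: real
  proof (cases "1 \<le> \<bar>w\<bar>")
    case True
    have "ennreal ((1 + \<bar>w\<bar>) powr (- p)) \<le> ennreal (\<bar>w\<bar> powr (- p))"
      using True p by (intro ennreal_leI powr_mono2') auto
    also have "\<dots> \<le> indicator {-1..1} w + ennreal (\<bar>w\<bar> powr (- p)) * indicator {x. 1 \<le> \<bar>x\<bar>} w"
      using True by (simp add: add_increasing)
    finally show ?thesis .
  next
    case False
    have "1 \<le> (1 + \<bar>w\<bar>) powr p"
      using p by (intro ge_one_powr_ge_zero) auto
    then have "(1 + \<bar>w\<bar>) powr (- p) \<le> 1"
      by (simp add: powr_minus inverse_le_1_iff)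
    then show ?thesis
      using False by (auto simp: indicator_def intro: ennreal_leI)
  qed
  then have "(\<integral>\<^sup>+w. ennreal ((1 + \<bar>w\<bar>) powr (- p)) \<partial>lborel)
     \<le> (\<integral>\<^sup>+w. indicator {-1..1} w + ennreal (\<bar>w\<bar> powr (- p)) * indicator {x. 1 \<le> \<bar>x\<bar>} w \<partial>lborel)"
    by (intro nn_integral_mono)
  also have "\<dots> = emeasure lborel {-1..1::real}
      + (\<integral>\<^sup>+w. ennreal (\<bar>w\<bar> powr (- p)) * indicator {x. 1 \<le> \<bar>x\<bar>} w \<partial>lborel)"
    by (subst nn_integral_add) auto
  also have "\<dots> < \<infinity>"
    using nn_integral_abs_powr_tail_finite[of "- p" 1] p by (simp add: less_top[symmetric])
  finally show ?thesis .
qed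

lemma nn_integral_bracket_powr_shift:
  "(\<integral>\<^sup>+w. ennreal ((1 + \<bar>w + c\<bar>) powr (- p)) \<partial>lborel) = (\<integral>\<^sup>+w. ennreal ((1 + \<bar>w\<bar>) powr (- p)) \<partial>lborel)"
  using nn_integral_real_affine[where f = "\<lambda>w. ennreal ((1 + \<bar>w\<bar>) powr (- p))" and c = 1 and t = c]
  by (simp add: add.commute)

definition high_multiplier :: "real \<Rightarrow> real \<Rightarrow> real \<Rightarrow> real" where
  "high_multiplier s a \<xi> = indicator {\<xi>. a \<le> \<bar>\<xi>\<bar>} \<xi> * \<bar>\<xi>\<bar> powr s"

lemma high_multiplier_nonneg: "0 \<le> high_multiplier s a \<xi>"
  by (simp add: high_multiplier_def)

lemma borel_measurable_high_multiplier [measurable]: "high_multiplier s a \<in> borel_measurable borel"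
  unfolding high_multiplier_def[abs_def] by measurable

lemma borel_measurable_phi [measurable]: "phi beta gamma \<in> borel_measurable borel"
  unfolding phi_def[abs_def] by measurable

definition dual_weight :: "real \<Rightarrow> real \<Rightarrow> real \<Rightarrow> (real \<Rightarrow> real) \<Rightarrow> real \<times> real \<Rightarrow> real" where
  "dual_weight s a b \<phi> p = (high_multiplier s a (fst p))\<^sup>2 * (1 + \<bar>snd p + \<phi> (fst p)\<bar>) powr (- (2 * b))"

text \<open>The \<open>\<tau>\<close>-integral of the weight does not depend on \<open>\<phi>(\<xi>)\<close> by translation invariance, so any
  measurable dispersion relation will do.\<close>

lemma nn_integral_dual_weight_finite:
  fixes \<phi> :: "real \<Rightarrow> real"
  assumes [measurable]: "\<phi> \<in> borel_measurable borel"
    and s: "s < - 1 / 2" and a: "a > 0" and b: "b > 1 / 2"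
  shows "(\<integral>\<^sup>+p. dual_weight s a b \<phi> p \<partial>(lborel \<Otimes>\<^sub>M lborel)) < \<infinity>"
proof -
  let ?T = "\<integral>\<^sup>+w. ennreal ((1 + \<bar>w\<bar>) powr (- (2 * b))) \<partial>lborel"
  have "(high_multiplier s a \<xi>)\<^sup>2 = indicator {\<xi>. a \<le> \<bar>\<xi>\<bar>} \<xi> * \<bar>\<xi>\<bar> powr (2 * s)" for \<xi>
    unfolding high_multiplier_def power_mult_distrib mult_2 powr_add power2_eq_square
    by (simp add: indicator_def)
  then have "(\<integral>\<^sup>+p. dual_weight s a b \<phi> p \<partial>(lborel \<Otimes>\<^sub>M lborel))
    = (\<integral>\<^sup>+\<xi>. \<integral>\<^sup>+\<tau>. ennreal (indicator {\<xi>. a \<le> \<bar>\<xi>\<bar>} \<xi> * \<bar>\<xi>\<bar> powr (2 * s))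
         * ennreal ((1 + \<bar>\<tau> + \<phi> \<xi>\<bar>) powr (- (2 * b))) \<partial>lborel \<partial>lborel)"
    by (subst lborel.nn_integral_fst[symmetric]) (auto simp: dual_weight_def ennreal_mult[symmetric])
  also have "\<dots> = (\<integral>\<^sup>+\<xi>. ennreal (indicator {\<xi>. a \<le> \<bar>\<xi>\<bar>} \<xi> * \<bar>\<xi>\<bar> powr (2 * s)) * ?T \<partial>lborel)"
    by (simp add: nn_integral_cmult nn_integral_bracket_powr_shift)
  also have "\<dots> = (\<integral>\<^sup>+\<xi>. ennreal (\<bar>\<xi>\<bar> powr (2 * s)) * indicator {\<xi>. a \<le> \<bar>\<xi>\<bar>} \<xi> \<partial>lborel) * ?T"
    by (subst nn_integral_multc[symmetric]) (auto intro!: nn_integral_cong simp: indicator_def)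
  also have "\<dots> < \<infinity>"
    using nn_integral_abs_powr_tail_finite[of "2 * s" a] nn_integral_bracket_powr_finite[of "2 * b"] s a b
    by (simp add: ennreal_mult_less_top)
  finally show ?thesis .
qed

section \<open>The estimate\<close>

lemma norm_integral_le_nn_integral: "ennreal (norm (integral\<^sup>L M f)) \<le> (\<integral>\<^sup>+x. norm (f x) \<partial>M)"
  by (cases "integrable M f") (simp_all add: integral_norm_bound_ennreal not_integrable_integral_eq)

lemma norm_fourier_inverse_le_nn_integral:
  "ennreal (norm (fourier_inverse h t)) \<le> ennreal (1 / (2 * pi)) * (\<integral>\<^sup>+w. norm (h w) \<partial>lborel)"
proof -
  have "ennreal (norm (fourier_inverse h t)) = ennreal (1 / (2 * pi)) * ennreal (norm (\<integral>w. iexp (t * w) * h w \<partial>lborel))"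
    by (simp add: fourier_inverse_def norm_mult norm_divide ennreal_mult[symmetric])
  also have "\<dots> \<le> ennreal (1 / (2 * pi)) * (\<integral>\<^sup>+w. norm (iexp (t * w) * h w) \<partial>lborel)"
    by (intro mult_left_mono norm_integral_le_nn_integral) simp
  finally show ?thesis
    by (simp add: norm_mult)
qed

lemma (in sigma_finite_measure) AE_pair_measure_snd:
  assumes "AE y in M. P y"
  shows "AE z in N \<Otimes>\<^sub>M M. P (snd z)"
proof -
  obtain B where B: "B \<in> null_sets M" "{y \<in> space M. \<not> P y} \<subseteq> B"
    using assms by (auto elim!: AE_E simp: null_sets_def)
  show ?thesis
    by (rule AE_I'[OF times_in_null_sets2[OF sets.top B(1)]]) (use B(2) in \<open>auto simp: space_pair_measure\<close>)
qed

lemma nn_integral_FTx_le_nn_integral_FT2: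
  assumes "FT2 u \<in> borel_measurable borel"
    and inversion: "AE \<xi> in lborel. FTx u (\<xi>, t) = fourier_inverse (\<lambda>w. FT2 u (\<xi>, w)) t"
  shows "(\<integral>\<^sup>+\<xi>. high_multiplier s a \<xi> * cmod (FTx u (\<xi>, t)) \<partial>lborel)
    \<le> ennreal (1 / (2 * pi)) * (\<integral>\<^sup>+p. ennreal (high_multiplier s a (fst p) * cmod (FT2 u p)) \<partial>(lborel \<Otimes>\<^sub>M lborel))"
proof -
  have [measurable]: "FT2 u \<in> borel_measurable (borel \<Otimes>\<^sub>M borel)"
    using assms(1) by (simp add: borel_prod)
  let ?m = "high_multiplier s a" and ?c = "ennreal (1 / (2 * pi))"
  have "(\<integral>\<^sup>+\<xi>. ?m \<xi> * cmod (FTx u (\<xi>, t)) \<partial>lborel)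
      = (\<integral>\<^sup>+\<xi>. ?m \<xi> * cmod (fourier_inverse (\<lambda>w. FT2 u (\<xi>, w)) t) \<partial>lborel)"
    using inversion by (intro nn_integral_cong_AE) auto
  also have "\<dots> \<le> (\<integral>\<^sup>+\<xi>. ?c * (\<integral>\<^sup>+w. ?m \<xi> * cmod (FT2 u (\<xi>, w)) \<partial>lborel) \<partial>lborel)"
  proof (intro nn_integral_mono)
    fix \<xi>
    have "ennreal (?m \<xi> * cmod (fourier_inverse (\<lambda>w. FT2 u (\<xi>, w)) t))
        \<le> ennreal (?m \<xi>) * (?c * (\<integral>\<^sup>+w. cmod (FT2 u (\<xi>, w)) \<partial>lborel))"
      by (simp add: ennreal_mult high_multiplier_nonneg mult_left_mono norm_fourier_inverse_le_nn_integral)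
    also have "\<dots> = ?c * (\<integral>\<^sup>+w. ?m \<xi> * cmod (FT2 u (\<xi>, w)) \<partial>lborel)"
      by (simp add: nn_integral_cmult ennreal_mult high_multiplier_nonneg ac_simps)
    finally show "ennreal (?m \<xi> * cmod (fourier_inverse (\<lambda>w. FT2 u (\<xi>, w)) t))
        \<le> ?c * (\<integral>\<^sup>+w. ?m \<xi> * cmod (FT2 u (\<xi>, w)) \<partial>lborel)" .
  qed
  also have "\<dots> = ?c * (\<integral>\<^sup>+p. ennreal (?m (fst p) * cmod (FT2 u p)) \<partial>(lborel \<Otimes>\<^sub>M lborel))"
    by (subst lborel.nn_integral_fst[symmetric]) (simp_all add: nn_integral_cmult)
  finally show ?thesis .
qed

lemma norm_Dx_high_le_nn_integral_FT2:
  assumes "FT2 u \<in> borel_measurable borel"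
    and inversion: "AE \<xi> in lborel. FTx u (\<xi>, t) = fourier_inverse (\<lambda>w. FT2 u (\<xi>, w)) t"
  shows "ennreal (cmod (Dx_high s a u (x, t)))
    \<le> ennreal (1 / (4 * pi\<^sup>2)) * (\<integral>\<^sup>+p. ennreal (high_multiplier s a (fst p) * cmod (FT2 u p)) \<partial>(lborel \<Otimes>\<^sub>M lborel))"
proof -
  let ?m = "high_multiplier s a" and ?c = "ennreal (1 / (2 * pi))"
  let ?I = "\<integral>\<^sup>+p. ennreal (?m (fst p) * cmod (FT2 u p)) \<partial>(lborel \<Otimes>\<^sub>M lborel)"
  have "ennreal (cmod (Dx_high s a u (x, t)))
      = ?c * ennreal (cmod (\<integral>\<xi>. ?m \<xi> * iexp (x * \<xi>) * FTx u (\<xi>, t) \<partial>lborel))"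
    by (simp add: Dx_high_def high_multiplier_def norm_mult norm_divide ennreal_mult[symmetric])
  also have "\<dots> \<le> ?c * (\<integral>\<^sup>+\<xi>. ?m \<xi> * cmod (FTx u (\<xi>, t)) \<partial>lborel)"
    by (intro mult_left_mono order.trans[OF norm_integral_le_nn_integral] nn_integral_mono)
       (simp_all add: norm_mult high_multiplier_nonneg)
  also have "\<dots> \<le> ?c * (?c * ?I)"
    by (intro mult_left_mono nn_integral_FTx_le_nn_integral_FT2 assms) simp
  also have "?c * (?c * ?I) = ennreal (1 / (4 * pi\<^sup>2)) * ?I"
    by (simp add: mult.assoc[symmetric] ennreal_mult[symmetric] power2_eq_square)
  finally show ?thesis .
qed

lemma nn_integral_weighted_Cauchy_Schwarz:
  fixes f g W :: "'a \<Rightarrow> real"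
  assumes [measurable]: "f \<in> borel_measurable M" "g \<in> borel_measurable M" "W \<in> borel_measurable M"
    and W: "\<And>x. W x > 0"
  shows "(\<integral>\<^sup>+x. ennreal (\<bar>f x\<bar> * \<bar>g x\<bar>) \<partial>M)\<^sup>2
    \<le> (\<integral>\<^sup>+x. ennreal ((f x)\<^sup>2 * W x powr (- c)) \<partial>M) * (\<integral>\<^sup>+x. ennreal (W x powr c * (g x)\<^sup>2) \<partial>M)"
proof -
  let ?F = "\<lambda>x. ennreal (\<bar>f x\<bar> * W x powr (- (c / 2)))" and ?G = "\<lambda>x. ennreal (W x powr (c / 2) * \<bar>g x\<bar>)"
  have "(\<integral>\<^sup>+x. ?F x * ?G x \<partial>M)\<^sup>2 \<le> (\<integral>\<^sup>+x. ?F x ^ 2 \<partial>M) * (\<integral>\<^sup>+x. ?G x ^ 2 \<partial>M)"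
    by (rule Cauchy_Schwarz_nn_integral) measurable
  moreover have "?F x * ?G x = ennreal (\<bar>f x\<bar> * \<bar>g x\<bar>)" for x
  proof -
    have "?F x * ?G x = ennreal (\<bar>f x\<bar> * \<bar>g x\<bar> * (W x powr (- (c / 2)) * W x powr (c / 2)))"
      by (simp add: ennreal_mult[symmetric] ac_simps)
    also have "W x powr (- (c / 2)) * W x powr (c / 2) = 1"
      using W[of x] by (simp flip: powr_add)
    finally show ?thesis
      by simp
  qed
  moreover have "(W x powr r)\<^sup>2 = W x powr (2 * r)" for x r
    using W[of x] by (simp add: powr_power)
  then have "?F x ^ 2 = ennreal ((f x)\<^sup>2 * W x powr (- c))" "?G x ^ 2 = ennreal (W x powr c * (g x)\<^sup>2)" for x
    by (simp_all add: ennreal_power power_mult_distrib)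
  ultimately show ?thesis
    by simp
qed

lemma X_weight_nonneg: "0 \<le> X_weight beta gamma b u p"
  by (cases p) (simp add: X_weight_def)

lemma X0b_norm_nonneg: "0 \<le> X0b_norm beta gamma b u"
  unfolding X0b_norm_def by (simp add: integral_nonneg_AE X_weight_nonneg)

lemma nn_integral_FT2_squared_le_X0b_norm:
  assumes F: "FT2 u \<in> borel_measurable borel" and X: "integrable lborel (X_weight beta gamma b u)"
  shows "(\<integral>\<^sup>+p. ennreal (high_multiplier s a (fst p) * cmod (FT2 u p)) \<partial>(lborel \<Otimes>\<^sub>M lborel))\<^sup>2
    \<le> (\<integral>\<^sup>+p. dual_weight s a b (phi beta gamma) p \<partial>(lborel \<Otimes>\<^sub>M lborel)) * ennreal ((X0b_norm beta gamma b u)\<^sup>2)"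
proof -
  have [measurable]: "FT2 u \<in> borel_measurable (borel \<Otimes>\<^sub>M borel)"
    using F by (simp add: borel_prod)
  have weight: "X_weight beta gamma b u p = (1 + \<bar>snd p + phi beta gamma (fst p)\<bar>) powr (2 * b) * (cmod (FT2 u p))\<^sup>2" for p
    by (cases p) (simp add: X_weight_def)
  have "(\<integral>\<^sup>+p. ennreal (X_weight beta gamma b u p) \<partial>(lborel \<Otimes>\<^sub>M lborel)) = ennreal (\<integral>p. X_weight beta gamma b u p \<partial>lborel)"
    unfolding lborel_prod by (intro nn_integral_eq_integral X) (simp add: X_weight_nonneg)
  also have "(\<integral>p. X_weight beta gamma b u p \<partial>lborel) = (X0b_norm beta gamma b u)\<^sup>2"
    unfolding X0b_norm_def by (simp add: integral_nonneg_AE X_weight_nonneg)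
  finally have "(\<integral>\<^sup>+p. ennreal (X_weight beta gamma b u p) \<partial>(lborel \<Otimes>\<^sub>M lborel)) = ennreal ((X0b_norm beta gamma b u)\<^sup>2)" .
  moreover have "(\<integral>\<^sup>+p. ennreal (\<bar>high_multiplier s a (fst p)\<bar> * \<bar>cmod (FT2 u p)\<bar>) \<partial>(lborel \<Otimes>\<^sub>M lborel))\<^sup>2
    \<le> (\<integral>\<^sup>+p. ennreal ((high_multiplier s a (fst p))\<^sup>2 * (1 + \<bar>snd p + phi beta gamma (fst p)\<bar>) powr (- (2 * b)))
          \<partial>(lborel \<Otimes>\<^sub>M lborel))
      * (\<integral>\<^sup>+p. ennreal ((1 + \<bar>snd p + phi beta gamma (fst p)\<bar>) powr (2 * b) * (cmod (FT2 u p))\<^sup>2)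
          \<partial>(lborel \<Otimes>\<^sub>M lborel))"
    by (rule nn_integral_weighted_Cauchy_Schwarz) (simp_all add: add_pos_nonneg)
  ultimately show ?thesis
    by (simp only: abs_norm_cancel abs_of_nonneg[OF high_multiplier_nonneg] weight[symmetric] dual_weight_def)
qed

lemma ennreal_le_if_power2_le:
  fixes x :: ennreal and y :: real
  assumes "x\<^sup>2 \<le> ennreal (y\<^sup>2)" and "0 \<le> y"
  shows "x \<le> ennreal y"
proof (cases x)
  case (real r)
  then have "ennreal (r\<^sup>2) \<le> ennreal (y\<^sup>2)"
    using assms(1) by (simp add: ennreal_power)
  then have "r\<^sup>2 \<le> y\<^sup>2"
    by (simp add: ennreal_le_iff)
  then show ?thesis
    unfolding real using assms(2) by (intro ennreal_leI) (rule power2_le_imp_le)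
qed (use assms in \<open>simp add: top_unique\<close>)

lemma nn_integral_FT2_le_X0b_norm:
  assumes F: "FT2 u \<in> borel_measurable borel" and X: "integrable lborel (X_weight beta gamma b u)"
    and finite: "(\<integral>\<^sup>+p. dual_weight s a b (phi beta gamma) p \<partial>(lborel \<Otimes>\<^sub>M lborel)) < \<infinity>"
  shows "(\<integral>\<^sup>+p. ennreal (high_multiplier s a (fst p) * cmod (FT2 u p)) \<partial>(lborel \<Otimes>\<^sub>M lborel))
    \<le> ennreal (sqrt (enn2real (\<integral>\<^sup>+p. dual_weight s a b (phi beta gamma) p \<partial>(lborel \<Otimes>\<^sub>M lborel)))
        * X0b_norm beta gamma b u)"
proof (rule ennreal_le_if_power2_le)
  let ?A = "\<integral>\<^sup>+p. dual_weight s a b (phi beta gamma) p \<partial>(lborel \<Otimes>\<^sub>M lborel)"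
  have "(\<integral>\<^sup>+p. ennreal (high_multiplier s a (fst p) * cmod (FT2 u p)) \<partial>(lborel \<Otimes>\<^sub>M lborel))\<^sup>2
      \<le> ?A * ennreal ((X0b_norm beta gamma b u)\<^sup>2)"
    by (rule nn_integral_FT2_squared_le_X0b_norm[OF F X])
  also have "\<dots> = ennreal ((sqrt (enn2real ?A) * X0b_norm beta gamma b u)\<^sup>2)"
    using finite by (simp add: power_mult_distrib ennreal_mult)
  finally show "(\<integral>\<^sup>+p. ennreal (high_multiplier s a (fst p) * cmod (FT2 u p)) \<partial>(lborel \<Otimes>\<^sub>M lborel))\<^sup>2
      \<le> ennreal ((sqrt (enn2real ?A) * X0b_norm beta gamma b u)\<^sup>2)" .
qed (simp add: X0b_norm_nonneg)

lemma Dx_high_le_X0b_norm: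
  fixes beta gamma s a b :: real
  assumes s: "s < - 1 / 2" and a: "a > 0" and b: "b > 1 / 2"
  shows "\<exists>C > 0. \<forall>u :: real \<times> real \<Rightarrow> complex.
           integrable lborel u \<and> integrable lborel (FT2 u) \<and> integrable lborel (X_weight beta gamma b u) \<longrightarrow>
           (AE p in lborel. cmod (Dx_high s a u p) \<le> C * X0b_norm beta gamma b u)"
proof -
  define A where "A = (\<integral>\<^sup>+p. dual_weight s a b (phi beta gamma) p \<partial>(lborel \<Otimes>\<^sub>M lborel))"
  have A: "A < \<infinity>"
    unfolding A_def using s a b by (intro nn_integral_dual_weight_finite) auto
  define K where "K = sqrt (enn2real A) / (4 * pi\<^sup>2)"
  show ?thesis
  proof (intro exI[of _ "K + 1"] conjI allI impI)
    show "K + 1 > 0"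
      by (simp add: K_def add_nonneg_pos)
    fix u :: "real \<times> real \<Rightarrow> complex"
    assume "integrable lborel u \<and> integrable lborel (FT2 u) \<and> integrable lborel (X_weight beta gamma b u)"
    then have u: "integrable lborel u" and F: "integrable lborel (FT2 u)"
      and X: "integrable lborel (X_weight beta gamma b u)"
      by auto
    have F_measurable: "FT2 u \<in> borel_measurable borel"
      using F by auto
    let ?N = "X0b_norm beta gamma b u"
    have pointwise: "cmod (Dx_high s a u (x, t)) \<le> (K + 1) * ?N"
      if "AE \<xi> in lborel. FTx u (\<xi>, t) = fourier_inverse (\<lambda>w. FT2 u (\<xi>, w)) t" for x t
    proof -
      have "ennreal (cmod (Dx_high s a u (x, t)))
          \<le> ennreal (1 / (4 * pi\<^sup>2)) * (\<integral>\<^sup>+p. ennreal (high_multiplier s a (fst p) * cmod (FT2 u p)) \<partial>(lborel \<Otimes>\<^sub>M lborel))"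
        by (rule norm_Dx_high_le_nn_integral_FT2[OF F_measurable that])
      also have "\<dots> \<le> ennreal (1 / (4 * pi\<^sup>2)) * ennreal (sqrt (enn2real A) * ?N)"
        using nn_integral_FT2_le_X0b_norm[OF F_measurable X A[unfolded A_def]]
        by (intro mult_left_mono) (simp_all add: A_def)
      finally have "cmod (Dx_high s a u (x, t)) \<le> K * ?N"
        by (simp add: K_def ennreal_mult[symmetric] X0b_norm_nonneg)
      also have "\<dots> \<le> (K + 1) * ?N"
        by (intro mult_right_mono) (simp_all add: X0b_norm_nonneg)
      finally show ?thesis .
    qed
    have "AE p in lborel \<Otimes>\<^sub>M lborel.
        AE \<xi> in lborel. FTx u (\<xi>, snd p) = fourier_inverse (\<lambda>w. FT2 u (\<xi>, w)) (snd p)"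
      by (rule lborel.AE_pair_measure_snd[OF AE_FTx_eq_fourier_inverse_FT2[OF u F]])
    then show "AE p in lborel. cmod (Dx_high s a u p) \<le> (K + 1) * ?N"
      unfolding lborel_prod by eventually_elim (use pointwise in auto)
  qed
qed

theorem lemma2p11:
  fixes beta gamma eps b :: real
  assumes "beta < 0" and "gamma > 0" and "0 < eps" and "eps \<le> 1 / 1000" and "b > 1 / 2"
  shows "\<exists>C > 0. \<forall>u :: real \<times> real \<Rightarrow> complex.
           integrable lborel u \<and> integrable lborel (FT2 u)
           \<and> integrable lborel (X_weight beta gamma b u) \<longrightarrow>
           (AE p in lborel. cmod (Dx_high (- 1/2 - 4 * eps) (a_const beta gamma) u p)
                              \<le> C * X0b_norm beta gamma b u)"
  using assms by (intro Dx_high_le_X0b_norm) (auto simp: a_const_def)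

end
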